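(* Let $\mathcal M,\mathcal X,\mathcal Y$ be finite sets, $P_M$ a distribution on $\mathcal M$, $W_{Y|X}$ a channel from $\mathcal X$ to $\mathcal Y$. For every constant $c>0$ and every distribution $P_X$ on $\mathcal X$, \[ P_{js}(P_M,W_{Y|X})\le \sum_{\substack{(m,x,y):\\ P_M(m)P_X(x)W_{Y|X}(y|x)<cP_X(x)\bar W_Y(y)}}P_M(m)P_X(x)W_{Y|X}(y|x)\;+\;\sum_{\substack{(m,x,y):\\ P_M(m)P_X(x)W_{Y|X}(y|x)\ge cP_X(x)\bar W_Y(y)}}P_X(x)\bar W_Y(y), \] where $\bar W_Y(y):=\sum_x P_X(x)W_{Y|X}(y|x)$. Moreover, for fixed $P_M,P_X,W_{Y|X}$, the right-hand side, as a function of $c\in(0,\infty)$, attains its minimum at $c=1$.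
   Context: A code $\phi=(\mathsf e,\mathsf d)$ consists of an encoder $\mathsf e:\mathcal M\to\mathcal X$ and a decoder $\mathsf d:\mathcal Y\to\mathcal M$. Its average error probability is $P_{js}[\phi|P_M,W_{Y|X}]:=\sum_{m\in\mathcal M}P_M(m)\,W_{Y|X}(\{y:\mathsf d(y)\neq m\}|\mathsf e(m))$, and $P_{js}(P_M,W_{Y|X}):=\inf_\phi P_{js}[\phi|P_M,W_{Y|X}]$. The second sum on the right-hand side is the measure of the indicated set under $1_M\times P_X\times\bar W_Y$, where $1_M$ is the counting measure on $\mathcal M$. *)

theory Defs
  imports Complex_Main
begin

text \<open>Finite alphabets are modelled by types of class finite.
  A distribution on a finite type is a nonnegative function summing to 1.
  A channel W from X to Y is given by W x y = W(y|x).\<close>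

definition is_dist :: "('a::finite \<Rightarrow> real) \<Rightarrow> bool" where
  "is_dist p \<longleftrightarrow> (\<forall>a. 0 \<le> p a) \<and> (\<Sum>a\<in>UNIV. p a) = 1"

definition is_channel :: "('x::finite \<Rightarrow> 'y::finite \<Rightarrow> real) \<Rightarrow> bool" where
  "is_channel W \<longleftrightarrow> (\<forall>x. is_dist (W x))"

definition err_prob ::
  "('m::finite \<Rightarrow> real) \<Rightarrow> ('x::finite \<Rightarrow> 'y::finite \<Rightarrow> real) \<Rightarrow> ('m \<Rightarrow> 'x) \<Rightarrow> ('y \<Rightarrow> 'm) \<Rightarrow> real" where
  "err_prob PM W e d = (\<Sum>m\<in>UNIV. PM m * (\<Sum>y\<in>{y. d y \<noteq> m}. W (e m) y))"

definition P_js ::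
  "('m::finite \<Rightarrow> real) \<Rightarrow> ('x::finite \<Rightarrow> 'y::finite \<Rightarrow> real) \<Rightarrow> real" where
  "P_js PM W = (INF ed\<in>(UNIV :: (('m \<Rightarrow> 'x) \<times> ('y \<Rightarrow> 'm)) set). err_prob PM W (fst ed) (snd ed))"

definition Wbar :: "('x::finite \<Rightarrow> real) \<Rightarrow> ('x \<Rightarrow> 'y \<Rightarrow> real) \<Rightarrow> 'y \<Rightarrow> real" where
  "Wbar PX W y = (\<Sum>x\<in>UNIV. PX x * W x y)"

definition bound_rhs ::
  "('m::finite \<Rightarrow> real) \<Rightarrow> ('x::finite \<Rightarrow> real) \<Rightarrow> ('x \<Rightarrow> 'y::finite \<Rightarrow> real) \<Rightarrow> real \<Rightarrow> real" where
  "bound_rhs PM PX W c =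
     (\<Sum>(m,x,y)\<in>{(m,x,y). PM m * PX x * W x y < c * PX x * Wbar PX W y}. PM m * PX x * W x y)
   + (\<Sum>(m,x,y)\<in>{(m,x,y). PM m * PX x * W x y \<ge> c * PX x * Wbar PX W y}. PX x * Wbar PX W y)"

end

theory Submission
  imports Defs "HOL-Library.FuncSet"
begin

text \<open>Random coding with a threshold decoder. Draw the codewords e(m) independently according
  to P_X and decode y to any message m whose pair (e(m), y) passes the test
  P_M(m) P_X(x) W(y|x) \<ge> c P_X(x) Wbar(y). A message is decoded wrongly only if its own pair fails
  the test or some other message passes it, so the union bound controls the error. Averaged over
  the codebook, the first event has the probability of failing the test under P_M P_X W, and by
  independence of e(m) and e(m') for m \<noteq> m' the second is bounded by the mass of the test region
  under 1_M \<times> P_X \<times> Wbar. Some codebook is at least as good as the average. For the second claim,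
  each summand of the right-hand side is one of the two numbers P_M P_X W and P_X Wbar, and at
  c = 1 it is always the smaller one. Neither argument uses c > 0.\<close>

definition iid_weight :: "('x \<Rightarrow> real) \<Rightarrow> ('m::finite \<Rightarrow> 'x) \<Rightarrow> real" where
  "iid_weight P e = (\<Prod>m\<in>UNIV. P (e m))"

lemma sum_iid_weight_prod:
  fixes P :: "'x::finite \<Rightarrow> real" and h :: "'m::finite \<Rightarrow> 'x \<Rightarrow> real"
  shows "(\<Sum>e\<in>UNIV. iid_weight P e * (\<Prod>m\<in>UNIV. h m (e m))) = (\<Prod>m\<in>UNIV. \<Sum>x\<in>UNIV. P x * h m x)"
  using prod_sum_PiE[of UNIV "\<lambda>_. UNIV" "\<lambda>m x. P x * h m x"]
  by (simp add: iid_weight_def prod.distrib)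

lemma sum_iid_weight:
  assumes "is_dist P"
  shows "(\<Sum>e\<in>UNIV. iid_weight P (e :: 'm::finite \<Rightarrow> 'x::finite)) = 1"
  using sum_iid_weight_prod[of P "\<lambda>_ _. 1 :: real"] assms by (simp add: is_dist_def)

lemma sum_iid_weight_single:
  fixes P :: "'x::finite \<Rightarrow> real" and m0 :: "'m::finite"
  assumes "is_dist P"
  shows "(\<Sum>e\<in>UNIV. iid_weight P e * h (e m0)) = (\<Sum>x\<in>UNIV. P x * h x)"
proof -
  have "(\<Sum>x\<in>UNIV. P x * (if m = m0 then h x else 1)) = (if m = m0 then \<Sum>x\<in>UNIV. P x * h x else 1)"
    for m using assms by (simp add: is_dist_def)
  then show ?thesis
    using sum_iid_weight_prod[of P "\<lambda>m x. if m = m0 then h x else 1"]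
    by (simp add: prod.delta)
qed

lemma sum_iid_weight_pair:
  fixes P :: "'x::finite \<Rightarrow> real" and m0 m1 :: "'m::finite"
  assumes "is_dist P" and "m0 \<noteq> m1"
  shows "(\<Sum>e\<in>UNIV. iid_weight P e * (h0 (e m0) * h1 (e m1)))
       = (\<Sum>x\<in>UNIV. P x * h0 x) * (\<Sum>x\<in>UNIV. P x * h1 x)"
proof -
  define h where "h m x = (if m = m0 then h0 x else 1) * (if m = m1 then h1 x else 1)" for m x
  have "(\<Prod>m\<in>UNIV. h m (e m)) = h0 (e m0) * h1 (e m1)" for e
    by (simp add: h_def prod.distrib)
  moreover have "(\<Sum>x\<in>UNIV. P x * h m x)
      = (if m = m0 then \<Sum>x\<in>UNIV. P x * h0 x else 1) * (if m = m1 then \<Sum>x\<in>UNIV. P x * h1 x else 1)"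
    for m using assms by (simp add: h_def is_dist_def)
  ultimately show ?thesis
    using sum_iid_weight_prod[of P h] by (simp add: prod.distrib)
qed

lemma err_prob_eq_sum_of_bool:
  "err_prob PM W e d = (\<Sum>m\<in>UNIV. \<Sum>y\<in>UNIV. PM m * W (e m) y * of_bool (d y \<noteq> m))"
  unfolding err_prob_def
  by (simp add: sum.inter_filter[symmetric] sum_distrib_left mult.assoc of_bool_def if_distrib cong: if_cong)

lemma of_bool_Some_neq_le:
  fixes T :: "'m::finite \<Rightarrow> bool"
  shows "of_bool ((SOME m. T m) \<noteq> m) \<le> of_bool (\<not> T m) + (\<Sum>m'\<in>- {m}. of_bool (T m') :: real)"
proof (cases "T m \<and> (SOME m. T m) \<noteq> m")
  case True
  then have "T (SOME m. T m)" by (metis someI)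
  then have "1 \<le> (\<Sum>m'\<in>- {m}. of_bool (T m') :: real)"
    using True member_le_sum[of "SOME m. T m" "- {m}" "\<lambda>m'. of_bool (T m') :: real"] by simp
  then show ?thesis using True by simp
qed (auto intro: sum_nonneg)

lemma err_prob_Some_decoder_le:
  assumes "\<And>m. 0 \<le> PM m" and "\<And>x y. 0 \<le> W x y"
  shows "err_prob PM W e (\<lambda>y. SOME m. T m y)
    \<le> (\<Sum>m\<in>UNIV. \<Sum>y\<in>UNIV. PM m * W (e m) y * of_bool (\<not> T m y))
      + (\<Sum>m\<in>UNIV. \<Sum>y\<in>UNIV. \<Sum>m'\<in>- {m}. PM m * W (e m) y * of_bool (T m' y))"
proof -
  have "err_prob PM W e (\<lambda>y. SOME m. T m y)
      \<le> (\<Sum>m\<in>UNIV. \<Sum>y\<in>UNIV. PM m * W (e m) y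
            * (of_bool (\<not> T m y) + (\<Sum>m'\<in>- {m}. of_bool (T m' y))))"
    unfolding err_prob_eq_sum_of_bool
    by (intro sum_mono mult_left_mono of_bool_Some_neq_le mult_nonneg_nonneg assms)
  then show ?thesis
    by (simp only: distrib_left sum_distrib_left sum.distrib)
qed

lemma P_js_le_err_prob: "P_js PM W \<le> err_prob PM W e d"
  unfolding P_js_def
  using cINF_lower[of "\<lambda>ed. err_prob PM W (fst ed) (snd ed)" UNIV "(e, d)"]
  by (simp add: bdd_below_finite)

lemma P_js_le_average:
  assumes "\<And>e. 0 \<le> w e" and "(\<Sum>e\<in>UNIV. w e) = 1"
  shows "P_js PM W \<le> (\<Sum>e\<in>UNIV. w e * err_prob PM W e (d e))"
proof -
  have "P_js PM W = (\<Sum>e\<in>UNIV. w e * P_js PM W)"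
    using assms(2) by (simp add: sum_distrib_right[symmetric])
  also have "\<dots> \<le> (\<Sum>e\<in>UNIV. w e * err_prob PM W e (d e))"
    by (intro sum_mono mult_left_mono assms(1) P_js_le_err_prob)
  finally show ?thesis .
qed

lemma sum_weighted_sum_swap:
  fixes w :: "'e \<Rightarrow> 'a::semiring_0"
  shows "(\<Sum>e\<in>E. w e * (\<Sum>i\<in>I. f e i)) = (\<Sum>i\<in>I. \<Sum>e\<in>E. w e * f e i)"
  by (simp add: sum_distrib_left sum.swap[of _ E])

lemma iid_average_missed_detection:
  fixes PX :: "'x::finite \<Rightarrow> real" and PM :: "'m::finite \<Rightarrow> real" and W :: "'x \<Rightarrow> 'y::finite \<Rightarrow> real"
  assumes "is_dist PX"
  shows "(\<Sum>e\<in>UNIV. iid_weight PX e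
            * (\<Sum>m\<in>UNIV. \<Sum>y\<in>UNIV. PM m * W (e m) y * of_bool (\<not> T m (e m) y)))
       = (\<Sum>m\<in>UNIV. \<Sum>x\<in>UNIV. \<Sum>y\<in>UNIV. of_bool (\<not> T m x y) * (PM m * PX x * W x y))"
proof -
  have "(\<Sum>e\<in>UNIV. iid_weight PX e * (PM m * W (e m) y * of_bool (\<not> T m (e m) y)))
      = (\<Sum>x\<in>UNIV. of_bool (\<not> T m x y) * (PM m * PX x * W x y))" for m y
    using sum_iid_weight_single[OF assms, of "\<lambda>x. PM m * W x y * of_bool (\<not> T m x y)" m]
    by (simp add: ac_simps)
  then show ?thesis
    by (simp only: sum_weighted_sum_swap) (intro sum.cong refl sum.swap)
qed

lemma Wbar_nonneg:
  assumes "is_dist PX" and "\<And>x y. 0 \<le> W x y"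
  shows "0 \<le> Wbar PX W y"
  using assms unfolding Wbar_def is_dist_def by (intro sum_nonneg mult_nonneg_nonneg) auto

lemma iid_average_false_alarm_le:
  fixes PX :: "'x::finite \<Rightarrow> real" and PM :: "'m::finite \<Rightarrow> real" and W :: "'x \<Rightarrow> 'y::finite \<Rightarrow> real"
  assumes PX: "is_dist PX" and PM: "is_dist PM" and W: "\<And>x y. 0 \<le> W x y"
  shows "(\<Sum>e\<in>UNIV. iid_weight PX e
            * (\<Sum>m\<in>UNIV. \<Sum>y\<in>UNIV. \<Sum>m'\<in>- {m}. PM m * W (e m) y * of_bool (T m' (e m') y)))
       \<le> (\<Sum>m\<in>UNIV. \<Sum>x\<in>UNIV. \<Sum>y\<in>UNIV. of_bool (T m x y) * (PX x * Wbar PX W y))"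
proof -
  define G where "G m y = (\<Sum>x\<in>UNIV. PX x * of_bool (T m x y))" for m y
  have G_nonneg: "0 \<le> G m y" for m y
    using PX unfolding G_def is_dist_def by (intro sum_nonneg) simp
  have "(\<Sum>e\<in>UNIV. iid_weight PX e * (PM m * W (e m) y * of_bool (T m' (e m') y)))
      = PM m * (Wbar PX W y * G m' y)" if "m' \<in> - {m}" for m y m'
  proof -
    have "(\<Sum>e\<in>UNIV. iid_weight PX e * (PM m * W (e m) y * of_bool (T m' (e m') y)))
        = PM m * (\<Sum>e\<in>UNIV. iid_weight PX e * (W (e m) y * of_bool (T m' (e m') y)))"
      by (simp add: sum_distrib_left ac_simps)
    then show ?thesis
      using sum_iid_weight_pair[OF PX, of m m' "\<lambda>x. W x y" "\<lambda>x. of_bool (T m' x y)"] that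
      by (simp add: Wbar_def G_def)
  qed
  then have "(\<Sum>e\<in>UNIV. iid_weight PX e
            * (\<Sum>m\<in>UNIV. \<Sum>y\<in>UNIV. \<Sum>m'\<in>- {m}. PM m * W (e m) y * of_bool (T m' (e m') y)))
      = (\<Sum>m\<in>UNIV. \<Sum>y\<in>UNIV. \<Sum>m'\<in>- {m}. PM m * (Wbar PX W y * G m' y))"
    by (simp only: sum_weighted_sum_swap) (intro sum.cong refl)
  also have "\<dots> \<le> (\<Sum>m\<in>UNIV. \<Sum>y\<in>UNIV. \<Sum>m'\<in>UNIV. PM m * (Wbar PX W y * G m' y))"
    using PM G_nonneg Wbar_nonneg[of PX W, OF PX W] unfolding is_dist_def
    by (intro sum_mono sum_mono2) (auto intro: mult_nonneg_nonneg)
  also have "\<dots> = (\<Sum>m\<in>UNIV. PM m * (\<Sum>y\<in>UNIV. \<Sum>m'\<in>UNIV. Wbar PX W y * G m' y))"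
    by (simp add: sum_distrib_left)
  also have "\<dots> = (\<Sum>y\<in>UNIV. \<Sum>m'\<in>UNIV. Wbar PX W y * G m' y)"
    using PM by (simp add: sum_distrib_right[symmetric] is_dist_def)
  also have "\<dots> = (\<Sum>y\<in>UNIV. \<Sum>m\<in>UNIV. \<Sum>x\<in>UNIV. of_bool (T m x y) * (PX x * Wbar PX W y))"
    unfolding G_def sum_distrib_left by (intro sum.cong refl) (simp add: ac_simps)
  also have "\<dots> = (\<Sum>m\<in>UNIV. \<Sum>x\<in>UNIV. \<Sum>y\<in>UNIV. of_bool (T m x y) * (PX x * Wbar PX W y))"
    by (subst sum.swap) (intro sum.cong refl sum.swap)
  finally show ?thesis .
qed

lemma P_js_le_test_errors:
  fixes PM :: "'m::finite \<Rightarrow> real" and PX :: "'x::finite \<Rightarrow> real"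
    and W :: "'x \<Rightarrow> 'y::finite \<Rightarrow> real" and T :: "'m \<Rightarrow> 'x \<Rightarrow> 'y \<Rightarrow> bool"
  assumes PM: "is_dist PM" and W: "is_channel W" and PX: "is_dist PX"
  shows "P_js PM W \<le> (\<Sum>m\<in>UNIV. \<Sum>x\<in>UNIV. \<Sum>y\<in>UNIV. of_bool (\<not> T m x y) * (PM m * PX x * W x y))
                     + (\<Sum>m\<in>UNIV. \<Sum>x\<in>UNIV. \<Sum>y\<in>UNIV. of_bool (T m x y) * (PX x * Wbar PX W y))"
proof -
  have PM_nonneg: "\<And>m. 0 \<le> PM m" and W_nonneg: "\<And>x y. 0 \<le> W x y"
    using PM W by (auto simp: is_dist_def is_channel_def)
  define missed where "missed e = (\<Sum>m\<in>UNIV. \<Sum>y\<in>UNIV. PM m * W (e m) y * of_bool (\<not> T m (e m) y))"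
    for e :: "'m \<Rightarrow> 'x"
  define false_alarm where "false_alarm e =
      (\<Sum>m\<in>UNIV. \<Sum>y\<in>UNIV. \<Sum>m'\<in>- {m}. PM m * W (e m) y * of_bool (T m' (e m') y))"
    for e :: "'m \<Rightarrow> 'x"
  have weight_nonneg: "0 \<le> iid_weight PX e" for e :: "'m \<Rightarrow> 'x"
    using PX unfolding iid_weight_def is_dist_def by (intro prod_nonneg) auto
  have "P_js PM W \<le> (\<Sum>e\<in>UNIV. iid_weight PX e * err_prob PM W e (\<lambda>y. SOME m. T m (e m) y))"
    by (intro P_js_le_average weight_nonneg sum_iid_weight PX)
  also have "\<dots> \<le> (\<Sum>e\<in>UNIV. iid_weight PX e * (missed e + false_alarm e))"
    unfolding missed_def false_alarm_def
    by (intro sum_mono mult_left_mono weight_nonneg err_prob_Some_decoder_le PM_nonneg W_nonneg)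
  also have "\<dots> = (\<Sum>e\<in>UNIV. iid_weight PX e * missed e) + (\<Sum>e\<in>UNIV. iid_weight PX e * false_alarm e)"
    by (simp only: distrib_left sum.distrib)
  also have "\<dots> \<le> (\<Sum>m\<in>UNIV. \<Sum>x\<in>UNIV. \<Sum>y\<in>UNIV. of_bool (\<not> T m x y) * (PM m * PX x * W x y))
                     + (\<Sum>m\<in>UNIV. \<Sum>x\<in>UNIV. \<Sum>y\<in>UNIV. of_bool (T m x y) * (PX x * Wbar PX W y))"
    unfolding missed_def false_alarm_def iid_average_missed_detection[OF PX]
    by (intro add_left_mono iid_average_false_alarm_le PX PM W_nonneg)
  finally show ?thesis .
qed

lemma sum_Collect_triple:
  fixes g :: "'a::finite \<Rightarrow> 'b::finite \<Rightarrow> 'c::finite \<Rightarrow> 'd::semiring_1"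
  shows "(\<Sum>(a, b, c)\<in>{(a, b, c). P a b c}. g a b c)
       = (\<Sum>a\<in>UNIV. \<Sum>b\<in>UNIV. \<Sum>c\<in>UNIV. of_bool (P a b c) * g a b c)"
proof -
  have "(\<Sum>(a, b, c)\<in>{(a, b, c). P a b c}. g a b c)
      = (\<Sum>(a, b, c)\<in>UNIV. of_bool (P a b c) * g a b c)"
    by (rule sum.mono_neutral_cong_left) (auto simp: of_bool_def split: if_splits)
  also have "\<dots> = (\<Sum>a\<in>UNIV. \<Sum>b\<in>UNIV. \<Sum>c\<in>UNIV. of_bool (P a b c) * g a b c)"
    by (simp only: UNIV_Times_UNIV[symmetric] sum.cartesian_product case_prod_conv)
  finally show ?thesis .
qed

lemma bound_rhs_eq:
  "bound_rhs PM PX W c =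
     (\<Sum>m\<in>UNIV. \<Sum>x\<in>UNIV. \<Sum>y\<in>UNIV.
        of_bool (\<not> c * PX x * Wbar PX W y \<le> PM m * PX x * W x y) * (PM m * PX x * W x y))
   + (\<Sum>m\<in>UNIV. \<Sum>x\<in>UNIV. \<Sum>y\<in>UNIV.
        of_bool (c * PX x * Wbar PX W y \<le> PM m * PX x * W x y) * (PX x * Wbar PX W y))"
  unfolding bound_rhs_def sum_Collect_triple not_le ..

lemma bound_rhs_one_le: "bound_rhs PM PX W 1 \<le> bound_rhs PM PX W c"
  unfolding bound_rhs_eq sum.distrib[symmetric] by (intro sum_mono) auto

theorem mainTheorem1:
  fixes PM :: "'m::finite \<Rightarrow> real" and PX :: "'x::finite \<Rightarrow> real"
    and W :: "'x \<Rightarrow> 'y::finite \<Rightarrow> real"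
  assumes "is_dist PM" and "is_channel W" and "is_dist PX"
  shows "(\<forall>c>0. P_js PM W \<le> bound_rhs PM PX W c)
       \<and> (\<forall>c>0. bound_rhs PM PX W 1 \<le> bound_rhs PM PX W c)"
proof -
  have "P_js PM W \<le> bound_rhs PM PX W c" for c
    unfolding bound_rhs_eq by (rule P_js_le_test_errors[OF assms])
  then show ?thesis
    using bound_rhs_one_le by blast
qed

end
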